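(* The collection $\mathsf g=\{\mathsf g(n)\}_{n\ge2}$, with operadic compositions $\circ_i:\mathsf g(m)\times\mathsf g(n)\to\mathsf g(m+n-1)$ given by grafting, is a nonsymmetric operad in the category of sets, and it is the free nonsymmetric operad generated by the collection $\mathsf p=\{\mathsf p(n)\}_{n\ge2}$ of prime chord diagrams.
   Context: $\mathsf g(n)$ is the set of gravity chord diagrams on an $(n+1)$-gon: sides labeled $1,\dots,n+1$ cyclically with side $n+1$ distinguished; a chord (segment between non-adjacent vertices) is labeled $\{i,j\}$, $i<j$, where $\{i,\dots,j\}$ is the interval of sides it cuts off not containing side $n+1$; a chord diagram is a set of chords; it is a gravity chord diagram if it contains no two chords $\{i,j\},\{j,k\}$ with $i<j<k$ and no three chords $\{i,k\},\{j,k\},\{j,l\}$ with $i<j<k<l$. The composition $G_1\circ_i G_2$ for $G_1\in\mathsf g(m)$, $G_2\in\mathsf g(n)$ glues the distinguished side of the $(n+1)$-gon of $G_2$ onto side $i$ of the $(m+1)$-gon of $G_1$ and takes the diagram $G_1\cup G_2\cup\{\text{glued side}\}$ on the resulting $(m+n)$-gon, whose distinguished side is that of $G_1$. A chord of a diagram is residual if no other chord of the diagram crosses it; a gravity chord diagram is prime if it has no residual chords, and $\mathsf p(n)\subset\mathsf g(n)$ denotes the set of prime ones. *)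

theory Defs
  imports Main
begin

text \<open>Chords of an (n+1)-gon: a chord is encoded by the pair (i,j), i<j, where
  {i..j} is the interval of sides it cuts off not containing side n+1.
  Side k joins vertices k-1 and k (vertices 0..n), so chord (i,j) joins vertices
  i-1 and j; non-adjacency means i<j and (i,j) is not (1,n).\<close>

definition chord :: "nat \<Rightarrow> nat \<times> nat \<Rightarrow> bool" where
  "chord n c \<longleftrightarrow> (case c of (i, j) \<Rightarrow> 1 \<le> i \<and> i < j \<and> j \<le> n \<and> (i, j) \<noteq> (1, n))"

definition chord_diagram :: "nat \<Rightarrow> (nat \<times> nat) set \<Rightarrow> bool" where
  "chord_diagram n G \<longleftrightarrow> (\<forall>c\<in>G. chord n c)"

definition gravity_diagram :: "nat \<Rightarrow> (nat \<times> nat) set \<Rightarrow> bool" where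
  "gravity_diagram n G \<longleftrightarrow> chord_diagram n G
     \<and> \<not> (\<exists>i j k. i < j \<and> j < k \<and> (i, j) \<in> G \<and> (j, k) \<in> G)
     \<and> \<not> (\<exists>i j k l. i < j \<and> j < k \<and> k < l \<and> (i, k) \<in> G \<and> (j, k) \<in> G \<and> (j, l) \<in> G)"

definition gdiag :: "nat \<Rightarrow> (nat \<times> nat) set set" where
  "gdiag n = {G. gravity_diagram n G}"

text \<open>Crossing of chords: (i,j) joins vertices i-1,j and (k,l) joins k-1,l;
  they cross iff the endpoints strictly interleave.\<close>
definition crosses :: "nat \<times> nat \<Rightarrow> nat \<times> nat \<Rightarrow> bool" where
  "crosses c d \<longleftrightarrow> (case c of (i, j) \<Rightarrow> case d of (k, l) \<Rightarrow>
      (i < k \<and> k \<le> j \<and> j < l) \<or> (k < i \<and> i \<le> l \<and> l < j))"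

definition residual :: "(nat \<times> nat) set \<Rightarrow> nat \<times> nat \<Rightarrow> bool" where
  "residual G c \<longleftrightarrow> c \<in> G \<and> \<not> (\<exists>d\<in>G. d \<noteq> c \<and> crosses d c)"

definition pdiag :: "nat \<Rightarrow> (nat \<times> nat) set set" where
  "pdiag n = {G. gravity_diagram n G \<and> \<not> (\<exists>c. residual G c)}"

text \<open>Grafting G1 \<circ>_i G2 with G1 in g(m), G2 in g(n): sides 1..i-1 of G1 stay,
  sides 1..n of G2 become i..i+n-1, sides i+1..m of G1 become i+n..m+n-1.\<close>
definition shift_outer :: "nat \<Rightarrow> nat \<Rightarrow> nat \<times> nat \<Rightarrow> nat \<times> nat" where
  "shift_outer n i c = (case c of (a, b) \<Rightarrow>
      (if a \<le> i then a else a + n - 1, if b < i then b else b + n - 1))"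

definition shift_inner :: "nat \<Rightarrow> nat \<times> nat \<Rightarrow> nat \<times> nat" where
  "shift_inner i c = (case c of (a, b) \<Rightarrow> (a + i - 1, b + i - 1))"

definition gcomp :: "nat \<Rightarrow> nat \<Rightarrow> nat \<Rightarrow> (nat \<times> nat) set \<Rightarrow> (nat \<times> nat) set \<Rightarrow> (nat \<times> nat) set" where
  "gcomp m n i G1 G2 = shift_outer n i ` G1 \<union> shift_inner i ` G2 \<union> {(i, i + n - 1)}"

text \<open>Nonsymmetric (non-unital) operads in Set with arities \<ge> 2:
  a collection Op(n), n \<ge> 2, and partial compositions
  c m n i : Op(m) \<times> Op(n) \<rightarrow> Op(m+n-1), 1 \<le> i \<le> m, satisfying the sequential
  and parallel associativity axioms.\<close>
definition ns_operad :: "(nat \<Rightarrow> 'a set) \<Rightarrow> (nat \<Rightarrow> nat \<Rightarrow> nat \<Rightarrow> 'a \<Rightarrow> 'a \<Rightarrow> 'a) \<Rightarrow> bool" where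
  "ns_operad Op c \<longleftrightarrow>
     (\<forall>m n i x y. 2 \<le> m \<longrightarrow> 2 \<le> n \<longrightarrow> 1 \<le> i \<longrightarrow> i \<le> m \<longrightarrow> x \<in> Op m \<longrightarrow> y \<in> Op n
        \<longrightarrow> c m n i x y \<in> Op (m + n - 1))
   \<and> (\<forall>l m n i j x y z. 2 \<le> l \<longrightarrow> 2 \<le> m \<longrightarrow> 2 \<le> n \<longrightarrow> 1 \<le> i \<longrightarrow> i \<le> l \<longrightarrow> 1 \<le> j \<longrightarrow> j \<le> m
        \<longrightarrow> x \<in> Op l \<longrightarrow> y \<in> Op m \<longrightarrow> z \<in> Op n
        \<longrightarrow> c (l + m - 1) n (i + j - 1) (c l m i x y) z = c l (m + n - 1) i x (c m n j y z))
   \<and> (\<forall>l m n i j x y z. 2 \<le> l \<longrightarrow> 2 \<le> m \<longrightarrow> 2 \<le> n \<longrightarrow> 1 \<le> i \<longrightarrow> i < j \<longrightarrow> j \<le> l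
        \<longrightarrow> x \<in> Op l \<longrightarrow> y \<in> Op m \<longrightarrow> z \<in> Op n
        \<longrightarrow> c (l + m - 1) n (j + m - 1) (c l m i x y) z = c (l + n - 1) m i (c l n j x z) y)"

text \<open>Morphisms of such operads (only their values on the carriers matter).\<close>
definition ns_operad_hom :: "(nat \<Rightarrow> 'a set) \<Rightarrow> (nat \<Rightarrow> nat \<Rightarrow> nat \<Rightarrow> 'a \<Rightarrow> 'a \<Rightarrow> 'a)
    \<Rightarrow> (nat \<Rightarrow> 'b set) \<Rightarrow> (nat \<Rightarrow> nat \<Rightarrow> nat \<Rightarrow> 'b \<Rightarrow> 'b \<Rightarrow> 'b) \<Rightarrow> (nat \<Rightarrow> 'a \<Rightarrow> 'b) \<Rightarrow> bool" where
  "ns_operad_hom Op c Q d F \<longleftrightarrow>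
     (\<forall>n x. 2 \<le> n \<longrightarrow> x \<in> Op n \<longrightarrow> F n x \<in> Q n)
   \<and> (\<forall>m n i x y. 2 \<le> m \<longrightarrow> 2 \<le> n \<longrightarrow> 1 \<le> i \<longrightarrow> i \<le> m \<longrightarrow> x \<in> Op m \<longrightarrow> y \<in> Op n
        \<longrightarrow> F (m + n - 1) (c m n i x y) = d m n i (F m x) (F n y))"

end

theory Submission
  imports Defs
begin

text \<open>
  Grafting only reindexes chords and adds the glued chord, so it is associative and, by a case
  analysis on where the chords of a forbidden pattern come from, it preserves gravity diagrams:
  g is an operad. The glued chord of a grafting is residual; conversely, cutting a gravity
  diagram along any residual chord writes it as a grafting of two gravity diagrams of smaller
  arity. So every diagram is assembled from prime ones, and a map h on primes extends to F by
  cutting along an arbitrarily chosen residual chord and recursing. F is a morphism by induction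
  on the arity: for a grafting G1 \<circ>_i G2 the chosen residual chord is either the glued one, or it
  comes from a residual chord of G1 or G2; then the associativity of g rebrackets the grafting so
  that the chosen chord becomes the glued one, and the associativity of the target operad closes
  the argument. Uniqueness follows by cutting along any residual chord.
\<close>

definition graft_start :: "nat \<Rightarrow> nat \<Rightarrow> nat \<Rightarrow> nat" where
  "graft_start n i a = (if a \<le> i then a else a + n - 1)"

definition graft_end :: "nat \<Rightarrow> nat \<Rightarrow> nat \<Rightarrow> nat" where
  "graft_end n i b = (if b < i then b else b + n - 1)"

lemma shift_outer_Pair [simp]: "shift_outer n i (a, b) = (graft_start n i a, graft_end n i b)"
  by (simp add: shift_outer_def graft_start_def graft_end_def)

lemma shift_inner_Pair [simp]: "shift_inner i (a, b) = (a + i - 1, b + i - 1)"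
  by (simp add: shift_inner_def)

lemma graft_start_less_iff [simp]: "1 \<le> n \<Longrightarrow> graft_start n i a < graft_start n i b \<longleftrightarrow> a < b"
  by (auto simp: graft_start_def)

lemma graft_end_less_iff [simp]: "1 \<le> n \<Longrightarrow> graft_end n i a < graft_end n i b \<longleftrightarrow> a < b"
  by (auto simp: graft_end_def)

lemma graft_start_eq_iff [simp]: "1 \<le> n \<Longrightarrow> graft_start n i a = graft_start n i b \<longleftrightarrow> a = b"
  by (auto simp: graft_start_def)

lemma graft_end_eq_iff [simp]: "1 \<le> n \<Longrightarrow> graft_end n i a = graft_end n i b \<longleftrightarrow> a = b"
  by (auto simp: graft_end_def)

lemma graft_start_eq_end_iff: "2 \<le> n \<Longrightarrow> graft_start n i a = graft_end n i b \<longleftrightarrow> a = b \<and> a \<noteq> i"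
  by (auto simp: graft_start_def graft_end_def)

lemma graft_start_less_end: "1 \<le> n \<Longrightarrow> a < b \<Longrightarrow> graft_start n i a < graft_end n i b"
  by (auto simp: graft_start_def graft_end_def)

lemma graft_start_range: "graft_start n i a \<le> i \<or> i + n \<le> graft_start n i a \<and> i < a"
  by (auto simp: graft_start_def)

lemma graft_end_range: "graft_end n i b < i \<or> i + n - 1 \<le> graft_end n i b \<and> i \<le> b"
  by (auto simp: graft_end_def)

lemma chord_diagram_memD:
  "chord_diagram n G \<Longrightarrow> (a, b) \<in> G \<Longrightarrow> 1 \<le> a \<and> a < b \<and> b \<le> n \<and> (a, b) \<noteq> (1, n)"
  by (auto simp: chord_diagram_def chord_def)

definition gravity_pattern_free :: "(nat \<times> nat) set \<Rightarrow> bool" where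
  "gravity_pattern_free G \<longleftrightarrow>
     \<not> (\<exists>i j k. i < j \<and> j < k \<and> (i, j) \<in> G \<and> (j, k) \<in> G)
   \<and> \<not> (\<exists>i j k l. i < j \<and> j < k \<and> k < l \<and> (i, k) \<in> G \<and> (j, k) \<in> G \<and> (j, l) \<in> G)"

lemma gravity_diagram_iff: "gravity_diagram n G \<longleftrightarrow> chord_diagram n G \<and> gravity_pattern_free G"
  by (simp add: gravity_diagram_def gravity_pattern_free_def)

lemma gravity_pattern_free_no_chain:
  "gravity_pattern_free G \<Longrightarrow> (a, b) \<in> G \<Longrightarrow> (b, c) \<in> G \<Longrightarrow> a < b \<Longrightarrow> b < c \<Longrightarrow> False"
  unfolding gravity_pattern_free_def by blast

lemma gravity_pattern_free_no_zigzag: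
  "gravity_pattern_free G \<Longrightarrow> (a, k) \<in> G \<Longrightarrow> (b, k) \<in> G \<Longrightarrow> (b, l) \<in> G
    \<Longrightarrow> a < b \<Longrightarrow> b < k \<Longrightarrow> k < l \<Longrightarrow> False"
  unfolding gravity_pattern_free_def by blast

lemma gravity_diagram_memD:
  "gravity_diagram n G \<Longrightarrow> (a, b) \<in> G \<Longrightarrow> 1 \<le> a \<and> a < b \<and> b \<le> n \<and> (a, b) \<noteq> (1, n)"
  unfolding gravity_diagram_iff using chord_diagram_memD by blast

text \<open>The glued chord of a grafting is the image of (1, n) under shift_inner, so the
  inner factor together with the glued chord behaves like a pattern-free diagram.\<close>

lemma gravity_pattern_free_insert_root:
  assumes "gravity_diagram n G"
  shows "gravity_pattern_free (insert (1, n) G)"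
proof -
  have free: "gravity_pattern_free G" using assms by (simp add: gravity_diagram_iff)
  have bounds: "1 \<le> a \<and> b \<le> n" if "(a, b) \<in> insert (1, n) G" for a b
    using that gravity_diagram_memD[OF assms] by auto
  show ?thesis
    unfolding gravity_pattern_free_def
  proof (intro conjI notI; elim exE conjE)
    fix a b c assume "a < b" "b < c" "(a, b) \<in> insert (1, n) G" "(b, c) \<in> insert (1, n) G"
    then show False using bounds[of a b] bounds[of b c] gravity_pattern_free_no_chain[OF free] by auto
  next
    fix a b k l assume "a < b" "b < k" "k < l" "(a, k) \<in> insert (1, n) G"
      "(b, k) \<in> insert (1, n) G" "(b, l) \<in> insert (1, n) G"
    then show False
      using bounds[of a k] bounds[of b l] gravity_pattern_free_no_zigzag[OF free] by auto
  qed
qed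

lemma gcomp_eq_shift_images:
  "gcomp m n i G1 G2 = shift_outer n i ` G1 \<union> shift_inner i ` insert (1, n) G2"
  by (auto simp: gcomp_def simp del: shift_outer_Pair)

lemma chord_shift_outer:
  assumes "chord m c" "2 \<le> n" "1 \<le> i" "i \<le> m"
  shows "chord (m + n - 1) (shift_outer n i c)"
  using assms by (cases c) (auto simp: chord_def graft_start_def graft_end_def)

lemma chord_shift_inner:
  assumes "chord n c \<or> c = (1, n)" "2 \<le> m" "2 \<le> n" "1 \<le> i" "i \<le> m"
  shows "chord (m + n - 1) (shift_inner i c)"
  using assms by (cases c) (auto simp: chord_def)

lemma chord_diagram_gcomp:
  assumes "chord_diagram m G1" "chord_diagram n G2" "2 \<le> m" "2 \<le> n" "1 \<le> i" "i \<le> m"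
  shows "chord_diagram (m + n - 1) (gcomp m n i G1 G2)"
  using assms chord_shift_outer[OF _ assms(4-6)] chord_shift_inner[OF _ assms(3-6)]
  unfolding chord_diagram_def gcomp_eq_shift_images by blast

lemma gcomp_gravity_cases [consumes 4, case_names outer inner]:
  assumes "(x, y) \<in> gcomp m n i G1 G2" "gravity_diagram m G1" "gravity_diagram n G2" "2 \<le> n"
  obtains (outer) a b where "(a, b) \<in> G1" "a < b" "x = graft_start n i a" "y = graft_end n i b"
    | (inner) a b where "(a, b) \<in> insert (1, n) G2" "1 \<le> a" "a < b" "b \<le> n"
      "x = a + i - 1" "y = b + i - 1"
proof -
  consider a b where "(a, b) \<in> G1" "(x, y) = shift_outer n i (a, b)"
    | a b where "(a, b) \<in> insert (1, n) G2" "(x, y) = shift_inner i (a, b)"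
    using assms(1) unfolding gcomp_eq_shift_images by (auto simp del: shift_outer_Pair shift_inner_Pair)
  then show thesis
  proof cases
    case (1 a b)
    then show thesis using that(1) gravity_diagram_memD[OF assms(2) 1(1)] by simp
  next
    case (2 a b)
    moreover have "1 \<le> a \<and> a < b \<and> b \<le> n"
      using 2(1) gravity_diagram_memD[OF assms(3), of a b] assms(4) by auto
    ultimately show thesis using that(2) by simp
  qed
qed

lemma gcomp_no_chain:
  assumes g1: "gravity_diagram m G1" and g2: "gravity_diagram n G2" and n: "2 \<le> n" and i: "1 \<le> i"
    and "p < q" "q < r" and pq: "(p, q) \<in> gcomp m n i G1 G2" and qr: "(q, r) \<in> gcomp m n i G1 G2"
  shows False
  using pq g1 g2 n
proof (cases rule: gcomp_gravity_cases)
  case (outer a b) note A = this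
  from qr g1 g2 n show False
  proof (cases rule: gcomp_gravity_cases)
    case (outer a' b')
    have "a' = b" using outer(3) A(4) graft_start_eq_end_iff[OF n] by metis
    moreover have "b < b'" using outer(4) A(4) \<open>q < r\<close> n by simp
    moreover have "gravity_pattern_free G1" using g1 by (simp add: gravity_diagram_iff)
    ultimately show False using gravity_pattern_free_no_chain[of G1 a b b'] A(1,2) outer(1) by simp
  next
    case (inner a' b')
    then show False using A \<open>p < q\<close> \<open>q < r\<close> graft_end_range[of n i b] by linarith
  qed
next
  case (inner a b) note A = this
  from qr g1 g2 n show False
  proof (cases rule: gcomp_gravity_cases)
    case (outer a' b')
    then show False using A \<open>p < q\<close> graft_start_range[of n i a'] by linarith
  next
    case (inner a' b')
    then have "a' = b" "b < b'" using A \<open>p < q\<close> \<open>q < r\<close> i by linarith+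
    then show False
      using gravity_pattern_free_no_chain[OF gravity_pattern_free_insert_root[OF g2] A(1), of b'] inner(1) A(3)
      by simp
  qed
qed

lemma gcomp_no_zigzag_outer_middle:
  assumes g1: "gravity_diagram m G1" and g2: "gravity_diagram n G2" and n: "2 \<le> n"
    and "p < q" "q < k" "k < l" and pk: "(p, k) \<in> gcomp m n i G1 G2" and ql: "(q, l) \<in> gcomp m n i G1 G2"
    and B: "(a2, b2) \<in> G1" "a2 < b2" "q = graft_start n i a2" "k = graft_end n i b2"
  shows False
  using pk g1 g2 n
proof (cases rule: gcomp_gravity_cases)
  case (outer a1 b1) note A = this
  from ql g1 g2 n show False
  proof (cases rule: gcomp_gravity_cases)
    case (outer a3 b3)
    have "b1 = b2" "a1 < a2" "a3 = a2" "b2 < b3"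
      using A B outer \<open>p < q\<close> \<open>k < l\<close> n by simp_all
    moreover have "gravity_pattern_free G1" using g1 by (simp add: gravity_diagram_iff)
    ultimately show False
      using gravity_pattern_free_no_zigzag[of G1 a1 b2 a2 b3] A(1) B(1,2) outer(1) by simp
  next
    case (inner a3 b3)
    then show False
      using B \<open>q < k\<close> \<open>k < l\<close> graft_start_range[of n i a2] graft_end_range[of n i b2] by linarith
  qed
next
  case (inner a1 b1)
  then show False using B \<open>p < q\<close> \<open>q < k\<close> graft_start_range[of n i a2] by linarith
qed

lemma gcomp_no_zigzag_inner_middle:
  assumes g1: "gravity_diagram m G1" and g2: "gravity_diagram n G2" and n: "2 \<le> n" and i: "1 \<le> i"
    and "p < q" "q < k" "k < l" and pk: "(p, k) \<in> gcomp m n i G1 G2" and ql: "(q, l) \<in> gcomp m n i G1 G2"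
    and B: "(a2, b2) \<in> insert (1, n) G2" "1 \<le> a2" "a2 < b2" "b2 \<le> n" "q = a2 + i - 1" "k = b2 + i - 1"
  shows False
  using ql g1 g2 n
proof (cases rule: gcomp_gravity_cases)
  case (outer a3 b3) note C = this
  from pk g1 g2 n show False
  proof (cases rule: gcomp_gravity_cases)
    case (outer a1 b1)
    \<comment> \<open>the middle chord is the glued one, and the two outer chords form a chain in G1\<close>
    have "q = i" "k = i + n - 1"
      using outer B C \<open>p < q\<close> \<open>q < k\<close> \<open>k < l\<close> graft_start_range[of n i a3] graft_end_range[of n i b1]
      by linarith+
    then have "graft_start n i a3 = graft_start n i i" "graft_end n i b1 = graft_end n i i"
      "graft_start n i a1 < graft_start n i i"
      using outer C \<open>p < q\<close> by (simp_all add: graft_start_def graft_end_def)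
    then have "a3 = i" "b1 = i" "a1 < i" using n by simp_all
    moreover have "gravity_pattern_free G1" using g1 by (simp add: gravity_diagram_iff)
    ultimately show False using gravity_pattern_free_no_chain[of G1 a1 i b3] outer(1) C(1,2) by simp
  next
    case (inner a1 b1)
    then show False using B C \<open>p < q\<close> \<open>q < k\<close> graft_start_range[of n i a3] by linarith
  qed
next
  case (inner a3 b3) note C = this
  from pk g1 g2 n show False
  proof (cases rule: gcomp_gravity_cases)
    case (outer a1 b1)
    then show False using B C \<open>k < l\<close> graft_end_range[of n i b1] by linarith
  next
    case (inner a1 b1)
    then have "b1 = b2" "a1 < a2" "a3 = a2" "b2 < b3"
      using B C \<open>p < q\<close> \<open>k < l\<close> i by linarith+
    then show False
      using gravity_pattern_free_no_zigzag[OF gravity_pattern_free_insert_root[OF g2], of a1 b2 a2 b3]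
        inner(1) B(1,3) C(1) by simp
  qed
qed

lemma gcomp_no_zigzag:
  assumes g1: "gravity_diagram m G1" and g2: "gravity_diagram n G2" and n: "2 \<le> n" and i: "1 \<le> i"
    and "p < q" "q < k" "k < l" and pk: "(p, k) \<in> gcomp m n i G1 G2"
    and qk: "(q, k) \<in> gcomp m n i G1 G2" and ql: "(q, l) \<in> gcomp m n i G1 G2"
  shows False
  using qk g1 g2 n
proof (cases rule: gcomp_gravity_cases)
  case (outer a2 b2)
  then show False using gcomp_no_zigzag_outer_middle[OF g1 g2 n \<open>p < q\<close> \<open>q < k\<close> \<open>k < l\<close> pk ql] by blast
next
  case (inner a2 b2)
  then show False using gcomp_no_zigzag_inner_middle[OF assms(1-4) \<open>p < q\<close> \<open>q < k\<close> \<open>k < l\<close> pk ql] by blast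
qed

lemma gravity_pattern_free_gcomp:
  assumes "gravity_diagram m G1" "gravity_diagram n G2" "2 \<le> n" "1 \<le> i"
  shows "gravity_pattern_free (gcomp m n i G1 G2)"
  unfolding gravity_pattern_free_def
  using gcomp_no_chain[OF assms] gcomp_no_zigzag[OF assms] by blast

lemma gravity_diagram_gcomp:
  assumes "gravity_diagram m G1" "gravity_diagram n G2" "2 \<le> m" "2 \<le> n" "1 \<le> i" "i \<le> m"
  shows "gravity_diagram (m + n - 1) (gcomp m n i G1 G2)"
  using assms chord_diagram_gcomp gravity_pattern_free_gcomp by (simp add: gravity_diagram_iff)

lemma image_cong_chord_diagram:
  assumes "chord_diagram n G" "\<And>a b. 1 \<le> a \<Longrightarrow> a < b \<Longrightarrow> b \<le> n \<Longrightarrow> f (a, b) = g (a, b)"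
  shows "f ` G = g ` G"
  using assms by (intro image_cong) (auto simp: chord_diagram_def chord_def)

lemma gcomp_assoc_seq:
  assumes x: "chord_diagram l x" and y: "chord_diagram m y" and z: "chord_diagram n z"
    and "2 \<le> m" "2 \<le> n" "1 \<le> i" "i \<le> l" "1 \<le> j" "j \<le> m"
  shows "gcomp (l + m - 1) n (i + j - 1) (gcomp l m i x y) z = gcomp l (m + n - 1) i x (gcomp m n j y z)"
proof -
  have "shift_outer n (i + j - 1) ` shift_outer m i ` x = shift_outer (m + n - 1) i ` x"
    unfolding image_image
    by (rule image_cong_chord_diagram[OF x]) (use assms in \<open>auto simp: graft_start_def graft_end_def\<close>)
  moreover have "shift_outer n (i + j - 1) ` shift_inner i ` y = shift_inner i ` shift_outer n j ` y"
    unfolding image_image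
    by (rule image_cong_chord_diagram[OF y]) (use assms in \<open>auto simp: graft_start_def graft_end_def\<close>)
  moreover have "shift_inner (i + j - 1) ` z = shift_inner i ` shift_inner j ` z"
    unfolding image_image by (rule image_cong_chord_diagram[OF z]) (use assms in auto)
  moreover have "shift_outer n (i + j - 1) (i, i + m - 1) = (i, i + (m + n - 1) - 1)"
    using assms by (auto simp: graft_start_def graft_end_def)
  moreover have "shift_inner i (j, j + n - 1) = (i + j - 1, i + j - 1 + n - 1)"
    using assms by auto
  ultimately show ?thesis
    unfolding gcomp_def image_Un image_insert image_empty by (simp only:) blast
qed

lemma gcomp_assoc_par:
  assumes x: "chord_diagram l x" and y: "chord_diagram m y" and z: "chord_diagram n z"
    and "2 \<le> m" "2 \<le> n" "1 \<le> i" "i < j" "j \<le> l"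
  shows "gcomp (l + m - 1) n (j + m - 1) (gcomp l m i x y) z = gcomp (l + n - 1) m i (gcomp l n j x z) y"
proof -
  have "shift_outer n (j + m - 1) ` shift_outer m i ` x = shift_outer m i ` shift_outer n j ` x"
    unfolding image_image
    by (rule image_cong_chord_diagram[OF x])
      (use assms in \<open>auto simp: graft_start_def graft_end_def add.commute add.left_commute\<close>)
  moreover have "shift_outer n (j + m - 1) ` shift_inner i ` y = shift_inner i ` y"
    unfolding image_image
    by (rule image_cong_chord_diagram[OF y]) (use assms in \<open>auto simp: graft_start_def graft_end_def\<close>)
  moreover have "shift_inner (j + m - 1) ` z = shift_outer m i ` shift_inner j ` z"
    unfolding image_image
    by (rule image_cong_chord_diagram[OF z]) (use assms in \<open>auto simp: graft_start_def graft_end_def\<close>)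
  moreover have "shift_outer n (j + m - 1) (i, i + m - 1) = (i, i + m - 1)"
    using assms by (auto simp: graft_start_def graft_end_def)
  moreover have "shift_outer m i (j, j + n - 1) = (j + m - 1, j + m - 1 + n - 1)"
    using assms by (auto simp: graft_start_def graft_end_def)
  ultimately show ?thesis
    unfolding gcomp_def image_Un image_insert image_empty by (simp only:) blast
qed

lemma ns_operad_gdiag: "ns_operad gdiag gcomp"
  unfolding ns_operad_def gdiag_def mem_Collect_eq
  using gravity_diagram_gcomp gcomp_assoc_seq gcomp_assoc_par
  by (simp add: gravity_diagram_iff)

lemma gravity_diagram_gcomp_outer_factor:
  assumes g: "gravity_diagram (m + n - 1) (gcomp m n i X Y)" and X: "chord_diagram m X"
    and n: "2 \<le> n"
  shows "gravity_diagram m X"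
proof -
  have free: "gravity_pattern_free (gcomp m n i X Y)" using g by (simp add: gravity_diagram_iff)
  have img: "(graft_start n i a, graft_end n i b) \<in> gcomp m n i X Y" if "(a, b) \<in> X" for a b
    using that by (force simp: gcomp_def)
  have glued: "(i, i + n - 1) \<in> gcomp m n i X Y" by (simp add: gcomp_def)
  have "a < b" if "(a, b) \<in> X" for a b using chord_diagram_memD[OF X that] by simp
  moreover have n1: "1 \<le> n" using n by simp
  ultimately have no_chain: False if "x < y" "y < z" "(x, y) \<in> X" "(y, z) \<in> X" for x y z
  proof (cases "y = i")
    case True
    \<comment> \<open>the two chords meet at side i, where they form a zigzag with the glued chord\<close>
    have "(x, i + n - 1) \<in> gcomp m n i X Y" "(i, z + n - 1) \<in> gcomp m n i X Y"
      using img[OF that(3)] img[OF that(4)] that(1,2) True by (simp_all add: graft_start_def graft_end_def)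
    then show False
      using gravity_pattern_free_no_zigzag[OF free _ glued] that(1,2) True n by fastforce
  next
    case False
    then have "graft_end n i y = graft_start n i y" using graft_start_eq_end_iff[OF n] by metis
    moreover have "graft_end n i y < graft_end n i z" using that(2) n1 by simp
    ultimately show False
      using gravity_pattern_free_no_chain[OF free img[OF that(3)]] img[OF that(4)]
        graft_start_less_end[OF n1 that(1), of i] by simp
  qed
  have no_zigzag: False
    if "p < q" "q < k" "k < l" "(p, k) \<in> X" "(q, k) \<in> X" "(q, l) \<in> X" for p q k l
    using gravity_pattern_free_no_zigzag[OF free img[OF that(4)] img[OF that(5)] img[OF that(6)]]
      graft_start_less_end[OF n1 that(2), of i] that(1,3) n1 by simp
  show ?thesis unfolding gravity_diagram_iff gravity_pattern_free_def
    using X no_chain no_zigzag by blast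
qed

lemma gravity_diagram_gcomp_inner_factor:
  assumes g: "gravity_diagram (m + n - 1) (gcomp m n i X Y)" and Y: "chord_diagram n Y"
    and i: "1 \<le> i"
  shows "gravity_diagram n Y"
proof -
  have free: "gravity_pattern_free (gcomp m n i X Y)" using g by (simp add: gravity_diagram_iff)
  have img: "(a + (i - 1), b + (i - 1)) \<in> gcomp m n i X Y" if "(a, b) \<in> Y" for a b
    using that i by (force simp: gcomp_def)
  have "gravity_pattern_free Y"
    unfolding gravity_pattern_free_def
  proof (intro conjI notI; elim exE conjE)
    fix x y z assume "x < y" "y < z" "(x, y) \<in> Y" "(y, z) \<in> Y"
    then show False using gravity_pattern_free_no_chain[OF free img img] by simp
  next
    fix p q k l assume "p < q" "q < k" "k < l" "(p, k) \<in> Y" "(q, k) \<in> Y" "(q, l) \<in> Y"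
    then show False using gravity_pattern_free_no_zigzag[OF free img img img] by simp
  qed
  then show ?thesis using Y by (simp add: gravity_diagram_iff)
qed

fun nested_in :: "nat \<Rightarrow> nat \<Rightarrow> nat \<times> nat \<Rightarrow> bool" where
  "nested_in n a (k, l) \<longleftrightarrow> a \<le> k \<and> l \<le> a + n - 1"

fun unshift_outer :: "nat \<Rightarrow> nat \<Rightarrow> nat \<times> nat \<Rightarrow> nat \<times> nat" where
  "unshift_outer n a (k, l) = (if k \<le> a then k else k - (n - 1), if l < a then l else l - (n - 1))"

fun unshift_inner :: "nat \<Rightarrow> nat \<times> nat \<Rightarrow> nat \<times> nat" where
  "unshift_inner a (k, l) = (k + 1 - a, l + 1 - a)"

definition outer_part :: "nat \<Rightarrow> nat \<Rightarrow> (nat \<times> nat) set \<Rightarrow> (nat \<times> nat) set" where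
  "outer_part n a G = unshift_outer n a ` {c \<in> G. \<not> nested_in n a c}"

definition inner_part :: "nat \<Rightarrow> nat \<Rightarrow> (nat \<times> nat) set \<Rightarrow> (nat \<times> nat) set" where
  "inner_part n a G = unshift_inner a ` {c \<in> G. nested_in n a c \<and> c \<noteq> (a, a + n - 1)}"

lemma
  assumes G1: "chord_diagram m G1" and G2: "chord_diagram n G2" and "2 \<le> n" "1 \<le> i" "i \<le> m"
  shows outer_part_gcomp: "outer_part n i (gcomp m n i G1 G2) = G1"
    and inner_part_gcomp: "inner_part n i (gcomp m n i G1 G2) = G2"
proof -
  have outer: "\<not> nested_in n i (shift_outer n i c)" "unshift_outer n i (shift_outer n i c) = c"
    if "c \<in> G1" for c
    using chord_diagram_memD[OF G1, of "fst c" "snd c"] that assms(3-5)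
    by (cases c; auto simp: graft_start_def graft_end_def)+
  have inner: "nested_in n i (shift_inner i c)" "unshift_inner i (shift_inner i c) = c"
    if "c \<in> G2" for c
    using chord_diagram_memD[OF G2, of "fst c" "snd c"] that assms(3-5) by (cases c; auto)+
  have glued: "(i, i + n - 1) \<notin> shift_inner i ` G2"
  proof
    assume "(i, i + n - 1) \<in> shift_inner i ` G2"
    then obtain a b where "(a, b) \<in> G2" "i = a + i - 1" "i + n - 1 = b + i - 1" by auto
    moreover from this have "a = 1" "b = n" using assms(4) by linarith+
    ultimately show False using chord_diagram_memD[OF G2] by blast
  qed
  have "{c \<in> gcomp m n i G1 G2. \<not> nested_in n i c} = shift_outer n i ` G1"
    using outer inner(1) by (auto simp: gcomp_def simp del: shift_outer_Pair shift_inner_Pair)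
  moreover have "unshift_outer n i ` shift_outer n i ` G1 = id ` G1"
    unfolding image_image using outer(2) by (intro image_cong) simp_all
  ultimately show "outer_part n i (gcomp m n i G1 G2) = G1" by (simp add: outer_part_def)
  have "{c \<in> gcomp m n i G1 G2. nested_in n i c \<and> c \<noteq> (i, i + n - 1)} = shift_inner i ` G2"
    using outer(1) inner(1) glued by (auto simp: gcomp_def simp del: shift_outer_Pair shift_inner_Pair)
  moreover have "unshift_inner i ` shift_inner i ` G2 = id ` G2"
    unfolding image_image using inner(2) by (intro image_cong) simp_all
  ultimately show "inner_part n i (gcomp m n i G1 G2) = G2" by (simp add: inner_part_def)
qed

lemma crosses_Pair:
  "crosses (k, l) (a, b) \<longleftrightarrow> k < a \<and> a \<le> l \<and> l < b \<or> a < k \<and> k \<le> b \<and> b < l"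
  by (simp add: crosses_def)

lemma unshift_outer_inverse:
  assumes "chord N (k, l)" "chord N (a, b)" "\<not> crosses (k, l) (a, b)" "\<not> nested_in (b + 1 - a) a (k, l)"
  shows "shift_outer (b + 1 - a) a (unshift_outer (b + 1 - a) a (k, l)) = (k, l)"
    and "chord (N + a - b) (unshift_outer (b + 1 - a) a (k, l))"
proof -
  have "b < k" if "a < k" using assms(3,4) that by (auto simp: crosses_Pair)
  moreover have "b \<le> l" if "a \<le> l" using assms(3,4) that by (auto simp: crosses_Pair)
  moreover have "\<not> (a \<le> k \<and> l \<le> b)" using assms(2,4) by (simp add: chord_def)
  ultimately show "shift_outer (b + 1 - a) a (unshift_outer (b + 1 - a) a (k, l)) = (k, l)"
    and "chord (N + a - b) (unshift_outer (b + 1 - a) a (k, l))"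
    using assms(1,2) by (auto simp: chord_def graft_start_def graft_end_def)
qed

lemma unshift_inner_inverse:
  assumes "chord N (k, l)" "a < b" "nested_in (b + 1 - a) a (k, l)" "(k, l) \<noteq> (a, b)"
  shows "shift_inner a (unshift_inner a (k, l)) = (k, l)"
    and "chord (b + 1 - a) (unshift_inner a (k, l))"
  using assms by (auto simp: chord_def)

lemma chord_diagram_residual_split:
  assumes G: "chord_diagram N G" and r: "residual G (a, b)"
  defines "n \<equiv> b + 1 - a" and "m \<equiv> N + a - b"
  shows "chord_diagram m (outer_part n a G)" "chord_diagram n (inner_part n a G)"
    and "G = gcomp m n a (outer_part n a G) (inner_part n a G)"
proof -
  have ab: "(a, b) \<in> G" "chord N (a, b)" using r G by (auto simp: residual_def chord_diagram_def)
  have b: "b = a + n - 1" using ab(2) by (auto simp: chord_def n_def)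
  have outer: "shift_outer n a (unshift_outer n a c) = c" "chord m (unshift_outer n a c)"
    if "c \<in> G" "\<not> nested_in n a c" for c
  proof -
    obtain k l where c: "c = (k, l)" by (cases c)
    have "c \<noteq> (a, b)" using that(2) b by auto
    then have "\<not> crosses c (a, b)" using r that(1) by (auto simp: residual_def)
    moreover have "chord N c" using G that(1) by (simp add: chord_diagram_def)
    ultimately show "shift_outer n a (unshift_outer n a c) = c" "chord m (unshift_outer n a c)"
      using unshift_outer_inverse[OF _ ab(2)] that(2) unfolding c n_def m_def by simp_all
  qed
  have inner: "shift_inner a (unshift_inner a c) = c" "chord n (unshift_inner a c)"
    if "c \<in> G" "nested_in n a c" "c \<noteq> (a, a + n - 1)" for c
  proof -
    obtain k l where c: "c = (k, l)" by (cases c)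
    have "chord N c" using G that(1) by (simp add: chord_diagram_def)
    moreover have "a < b" using ab(2) by (simp add: chord_def)
    ultimately show "shift_inner a (unshift_inner a c) = c" "chord n (unshift_inner a c)"
      using unshift_inner_inverse[of N k l a b] that(2,3) b unfolding c n_def by simp_all
  qed
  show "chord_diagram m (outer_part n a G)" "chord_diagram n (inner_part n a G)"
    using outer(2) inner(2) by (auto simp: outer_part_def inner_part_def chord_diagram_def)
  have "shift_outer n a ` outer_part n a G = id ` {c \<in> G. \<not> nested_in n a c}"
    unfolding outer_part_def image_image using outer(1) by (intro image_cong) simp_all
  moreover have "shift_inner a ` inner_part n a G = id ` {c \<in> G. nested_in n a c \<and> c \<noteq> (a, a + n - 1)}"
    unfolding inner_part_def image_image using inner(1) by (intro image_cong) simp_all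
  moreover have "nested_in n a (a, a + n - 1)" by simp
  ultimately show "G = gcomp m n a (outer_part n a G) (inner_part n a G)"
    unfolding gcomp_def using ab(1) b by auto
qed

lemma gravity_diagram_residual_split:
  assumes g: "gravity_diagram N G" and r: "residual G (a, b)"
  defines "n \<equiv> b + 1 - a" and "m \<equiv> N + a - b"
  shows "2 \<le> m" "2 \<le> n" "1 \<le> a" "a \<le> m" "N = m + n - 1" "b = a + n - 1"
    and "gravity_diagram m (outer_part n a G)" "gravity_diagram n (inner_part n a G)"
    and "G = gcomp m n a (outer_part n a G) (inner_part n a G)"
proof -
  have G: "chord_diagram N G" using g by (simp add: gravity_diagram_iff)
  have "chord N (a, b)" using r G by (auto simp: residual_def chord_diagram_def)
  then show "2 \<le> m" "2 \<le> n" "1 \<le> a" "a \<le> m" and N: "N = m + n - 1" and "b = a + n - 1"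
    by (auto simp: chord_def m_def n_def)
  note split = chord_diagram_residual_split[OF G r, folded n_def m_def]
  show "G = gcomp m n a (outer_part n a G) (inner_part n a G)" by (fact split(3))
  with g N have "gravity_diagram (m + n - 1) (gcomp m n a (outer_part n a G) (inner_part n a G))"
    by simp
  then show "gravity_diagram m (outer_part n a G)" "gravity_diagram n (inner_part n a G)"
    using gravity_diagram_gcomp_outer_factor gravity_diagram_gcomp_inner_factor split(1,2)
      \<open>2 \<le> n\<close> \<open>1 \<le> a\<close> by blast+
qed

lemma crosses_shift_outer: "1 \<le> n \<Longrightarrow> crosses c d \<Longrightarrow> crosses (shift_outer n i c) (shift_outer n i d)"
  by (cases c; cases d) (auto simp: crosses_Pair graft_start_def graft_end_def)

lemma crosses_shift_inner: "1 \<le> i \<Longrightarrow> crosses c d \<Longrightarrow> crosses (shift_inner i c) (shift_inner i d)"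
  by (cases c; cases d) (auto simp: crosses_Pair)

lemma residual_gcomp_glued:
  assumes "chord_diagram m G1" "chord_diagram n G2" "2 \<le> n" "1 \<le> i"
  shows "residual (gcomp m n i G1 G2) (i, i + n - 1)"
  unfolding residual_def
proof (intro conjI notI)
  show "(i, i + n - 1) \<in> gcomp m n i G1 G2" by (simp add: gcomp_def)
  assume "\<exists>c\<in>gcomp m n i G1 G2. c \<noteq> (i, i + n - 1) \<and> crosses c (i, i + n - 1)"
  then obtain c where c: "c \<in> gcomp m n i G1 G2" "crosses c (i, i + n - 1)" "c \<noteq> (i, i + n - 1)"
    by blast
  then consider (outer) a b where "(a, b) \<in> G1" "c = (graft_start n i a, graft_end n i b)"
    | (inner) a b where "(a, b) \<in> G2" "c = (a + i - 1, b + i - 1)"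
    unfolding gcomp_def by auto
  then show False
  proof cases
    case (outer a b)
    then show False
      using c(2) graft_start_range[of n i a] graft_end_range[of n i b]
      unfolding outer(2) crosses_Pair by linarith
  next
    case (inner a b)
    then show False
      using c(2) chord_diagram_memD[OF assms(2) inner(1)] unfolding inner(2) crosses_Pair by linarith
  qed
qed

lemma inj_shift_outer: "1 \<le> n \<Longrightarrow> inj (shift_outer n i)"
proof (rule injI)
  fix c d assume "1 \<le> n" "shift_outer n i c = shift_outer n i d"
  then show "c = d" by (cases c; cases d) simp
qed

lemma inj_shift_inner: "1 \<le> i \<Longrightarrow> inj (shift_inner i)"
proof (rule injI)
  fix c d assume "1 \<le> i" "shift_inner i c = shift_inner i d"
  then show "c = d" by (cases c; cases d) (simp, presburger)
qed

lemma residual_image_residual: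
  assumes "inj f" "\<And>c d. crosses c d \<Longrightarrow> crosses (f c) (f d)" "f ` G \<subseteq> H"
    and "residual H (f c)" "c \<in> G"
  shows "residual G c"
  unfolding residual_def
proof (intro conjI notI)
  show "c \<in> G" by (fact assms(5))
  assume "\<exists>d\<in>G. d \<noteq> c \<and> crosses d c"
  then obtain d where "d \<in> G" "d \<noteq> c" "crosses d c" by blast
  then have "f d \<in> H" "f d \<noteq> f c" "crosses (f d) (f c)"
    using assms(1-3) by (auto simp: inj_eq)
  then show False using assms(4) by (auto simp: residual_def)
qed

lemma residual_gcomp_cases:
  assumes "residual (gcomp m n i G1 G2) c" "2 \<le> n" "1 \<le> i"
  obtains (glued) "c = (i, i + n - 1)"
    | (outer) c' where "residual G1 c'" "c = shift_outer n i c'"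
    | (inner) c' where "residual G2 c'" "c = shift_inner i c'"
proof -
  have "c \<in> gcomp m n i G1 G2" using assms(1) by (simp add: residual_def)
  then consider "c = (i, i + n - 1)" | c' where "c' \<in> G1" "c = shift_outer n i c'"
    | c' where "c' \<in> G2" "c = shift_inner i c'"
    unfolding gcomp_def by blast
  then show thesis
  proof cases
    case (2 c')
    have "residual G1 c'"
      using residual_image_residual[OF inj_shift_outer _ _ _ 2(1), of n i "gcomp m n i G1 G2"]
        crosses_shift_outer assms 2(2) by (auto simp: gcomp_def)
    then show thesis using that(2) 2(2) by blast
  next
    case (3 c')
    have "residual G2 c'"
      using residual_image_residual[OF inj_shift_inner _ _ _ 3(1), of i "gcomp m n i G1 G2"]
        crosses_shift_inner assms 3(2) by (auto simp: gcomp_def)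
    then show thesis using that(3) 3(2) by blast
  qed (use that(1) in blast)
qed

definition some_residual :: "(nat \<times> nat) set \<Rightarrow> nat \<times> nat" where
  "some_residual G = (SOME c. residual G c)"

lemma residual_some_residual: "residual G c \<Longrightarrow> residual G (some_residual G)"
  unfolding some_residual_def by (rule someI)

text \<open>The residual chord along which a diagram is cut is chosen arbitrarily; that the result
  does not depend on this choice is the content of F_gcomp below.\<close>

function free_extension :: "(nat \<Rightarrow> (nat \<times> nat) set \<Rightarrow> 'b) \<Rightarrow> (nat \<Rightarrow> nat \<Rightarrow> nat \<Rightarrow> 'b \<Rightarrow> 'b \<Rightarrow> 'b)
    \<Rightarrow> nat \<Rightarrow> (nat \<times> nat) set \<Rightarrow> 'b" where
  "free_extension h d N G =
    (if gravity_diagram N G \<and> (\<exists>c. residual G c) then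
       (case some_residual G of (a, b) \<Rightarrow>
          d (N + a - b) (b + 1 - a) a
            (free_extension h d (N + a - b) (outer_part (b + 1 - a) a G))
            (free_extension h d (b + 1 - a) (inner_part (b + 1 - a) a G)))
     else h N G)"
  by auto
termination
proof (relation "measure (\<lambda>(h, d, N, G). N)")
  fix h :: "nat \<Rightarrow> (nat \<times> nat) set \<Rightarrow> 'b" and d N G a b
  assume G: "gravity_diagram N G \<and> Ex (residual G)" and ab: "(a, b) = some_residual G"
  then have "residual G (a, b)" using residual_some_residual by metis
  note split = gravity_diagram_residual_split[OF conjunct1[OF G] this]
  show "((h, d, N + a - b, outer_part (b + 1 - a) a G), h, d, N, G) \<in> measure (\<lambda>(h, d, N, G). N)"
    and "((h, d, b + 1 - a, inner_part (b + 1 - a) a G), h, d, N, G) \<in> measure (\<lambda>(h, d, N, G). N)"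
    using split(1-5) by auto
qed simp

declare free_extension.simps [simp del]

lemma free_extension_prime: "G \<in> pdiag N \<Longrightarrow> free_extension h d N G = h N G"
  by (subst free_extension.simps) (auto simp: pdiag_def)

lemma free_extension_some_residual:
  assumes "gravity_diagram N G" "residual G c" "some_residual G = (a, b)"
  shows "free_extension h d N G =
    d (N + a - b) (b + 1 - a) a
      (free_extension h d (N + a - b) (outer_part (b + 1 - a) a G))
      (free_extension h d (b + 1 - a) (inner_part (b + 1 - a) a G))"
proof -
  have "gravity_diagram N G \<and> (\<exists>c. residual G c)" using assms(1,2) by blast
  then show ?thesis by (subst free_extension.simps) (simp add: assms(3))
qed

lemma free_extension_glued:
  assumes X: "gravity_diagram m X" and Y: "gravity_diagram n Y"
    and "2 \<le> m" "2 \<le> n" "1 \<le> i" "i \<le> m"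
    and r: "some_residual (gcomp m n i X Y) = (i, i + n - 1)"
  shows "free_extension h d (m + n - 1) (gcomp m n i X Y)
    = d m n i (free_extension h d m X) (free_extension h d n Y)"
proof -
  have "gravity_diagram (m + n - 1) (gcomp m n i X Y)" using gravity_diagram_gcomp assms by blast
  moreover have "residual (gcomp m n i X Y) (i, i + n - 1)"
    using residual_gcomp_glued assms by (simp add: gravity_diagram_iff)
  moreover have "m + n - 1 + i - (i + n - 1) = m" "i + n - 1 + 1 - i = n" using assms by auto
  ultimately show ?thesis
    using free_extension_some_residual[where h = h and d = d, OF _ _ r]
      outer_part_gcomp inner_part_gcomp X Y assms
    by (simp add: gravity_diagram_iff)
qed

locale prime_valuation =
  fixes Q :: "nat \<Rightarrow> 'b set" and d :: "nat \<Rightarrow> nat \<Rightarrow> nat \<Rightarrow> 'b \<Rightarrow> 'b \<Rightarrow> 'b"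
    and h :: "nat \<Rightarrow> (nat \<times> nat) set \<Rightarrow> 'b"
  assumes operad: "ns_operad Q d"
    and prime_value: "\<And>n x. 2 \<le> n \<Longrightarrow> x \<in> pdiag n \<Longrightarrow> h n x \<in> Q n"
begin

abbreviation F :: "nat \<Rightarrow> (nat \<times> nat) set \<Rightarrow> 'b" where
  "F \<equiv> free_extension h d"

lemmas F_prime = free_extension_prime[where h = h and d = d]
lemmas F_some_residual = free_extension_some_residual[where h = h and d = d]
lemmas F_glued = free_extension_glued[where h = h and d = d]

lemma comp_closed:
  "2 \<le> m \<Longrightarrow> 2 \<le> n \<Longrightarrow> 1 \<le> i \<Longrightarrow> i \<le> m \<Longrightarrow> x \<in> Q m \<Longrightarrow> y \<in> Q n
    \<Longrightarrow> d m n i x y \<in> Q (m + n - 1)"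
  using conjunct1[OF operad[unfolded ns_operad_def]] by blast

lemma comp_assoc_seq:
  "2 \<le> l \<Longrightarrow> 2 \<le> m \<Longrightarrow> 2 \<le> n \<Longrightarrow> 1 \<le> i \<Longrightarrow> i \<le> l \<Longrightarrow> 1 \<le> j \<Longrightarrow> j \<le> m
    \<Longrightarrow> x \<in> Q l \<Longrightarrow> y \<in> Q m \<Longrightarrow> z \<in> Q n
    \<Longrightarrow> d (l + m - 1) n (i + j - 1) (d l m i x y) z = d l (m + n - 1) i x (d m n j y z)"
  using conjunct1[OF conjunct2[OF operad[unfolded ns_operad_def]]] by blast

lemma comp_assoc_par:
  "2 \<le> l \<Longrightarrow> 2 \<le> m \<Longrightarrow> 2 \<le> n \<Longrightarrow> 1 \<le> i \<Longrightarrow> i < j \<Longrightarrow> j \<le> l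
    \<Longrightarrow> x \<in> Q l \<Longrightarrow> y \<in> Q m \<Longrightarrow> z \<in> Q n
    \<Longrightarrow> d (l + m - 1) n (j + m - 1) (d l m i x y) z = d (l + n - 1) m i (d l n j x z) y"
  using conjunct2[OF conjunct2[OF operad[unfolded ns_operad_def]]] by blast

lemma F_in_Q: "2 \<le> N \<Longrightarrow> gravity_diagram N G \<Longrightarrow> F N G \<in> Q N"
proof (induction N arbitrary: G rule: less_induct)
  case (less N)
  show ?case
  proof (cases "\<exists>c. residual G c")
    case False
    then have "G \<in> pdiag N" using less.prems by (simp add: pdiag_def)
    then show ?thesis using F_prime prime_value[of N G] less.prems(1) by simp
  next
    case True
    then obtain a b where ab: "some_residual G = (a, b)" and r: "residual G (a, b)"
      using residual_some_residual by (metis surj_pair)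
    note split = gravity_diagram_residual_split[OF less.prems(2) r]
    have "d (N + a - b) (b + 1 - a) a (F (N + a - b) (outer_part (b + 1 - a) a G))
        (F (b + 1 - a) (inner_part (b + 1 - a) a G)) \<in> Q (N + a - b + (b + 1 - a) - 1)"
      using split by (intro comp_closed less.IH) auto
    moreover have "N + a - b + (b + 1 - a) - 1 = N" using split by simp
    ultimately show ?thesis
      using F_some_residual[OF less.prems(2) r ab] by simp
  qed
qed

lemma F_assoc_seq:
  assumes A: "gravity_diagram l A" and B: "gravity_diagram m B" and C: "gravity_diagram n C"
    and "2 \<le> l" "2 \<le> m" "2 \<le> n" "1 \<le> i" "i \<le> l" "1 \<le> j" "j \<le> m"
    and AB: "F (l + m - 1) (gcomp l m i A B) = d l m i (F l A) (F m B)"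
    and BC: "F (m + n - 1) (gcomp m n j B C) = d m n j (F m B) (F n C)"
    and r: "some_residual (gcomp l (m + n - 1) i A (gcomp m n j B C))
      \<in> {(i, i + (m + n - 1) - 1), (i + j - 1, i + j - 1 + n - 1)}"
  shows "F (l + (m + n - 1) - 1) (gcomp l (m + n - 1) i A (gcomp m n j B C))
    = d l (m + n - 1) i (F l A) (d m n j (F m B) (F n C))"
proof -
  have chords: "chord_diagram l A" "chord_diagram m B" "chord_diagram n C"
    using A B C by (simp_all add: gravity_diagram_iff)
  have BC_grav: "gravity_diagram (m + n - 1) (gcomp m n j B C)"
    using gravity_diagram_gcomp[OF B C] assms by blast
  have AB_grav: "gravity_diagram (l + m - 1) (gcomp l m i A B)"
    using gravity_diagram_gcomp[OF A B] assms by blast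
  have G: "gcomp l (m + n - 1) i A (gcomp m n j B C)
      = gcomp (l + m - 1) n (i + j - 1) (gcomp l m i A B) C"
    using gcomp_assoc_seq[OF chords] assms by simp
  from r consider
      "some_residual (gcomp l (m + n - 1) i A (gcomp m n j B C)) = (i, i + (m + n - 1) - 1)"
    | "some_residual (gcomp (l + m - 1) n (i + j - 1) (gcomp l m i A B) C)
        = (i + j - 1, i + j - 1 + n - 1)"
    unfolding G by blast
  then show ?thesis
  proof cases
    case 1
    then show ?thesis using F_glued[OF A BC_grav] BC assms by simp
  next
    case 2
    have "l + (m + n - 1) - 1 = l + m - 1 + n - 1" using assms by simp
    moreover have "F (l + m - 1 + n - 1) (gcomp (l + m - 1) n (i + j - 1) (gcomp l m i A B) C)
        = d (l + m - 1) n (i + j - 1) (d l m i (F l A) (F m B)) (F n C)"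
      using F_glued[OF AB_grav C _ _ _ _ 2] AB assms by simp
    moreover have "\<dots> = d l (m + n - 1) i (F l A) (d m n j (F m B) (F n C))"
      using comp_assoc_seq F_in_Q A B C assms by simp
    ultimately show ?thesis unfolding G by simp
  qed
qed

lemma F_assoc_par:
  assumes A: "gravity_diagram l A" and B: "gravity_diagram m B" and C: "gravity_diagram n C"
    and "2 \<le> l" "2 \<le> m" "2 \<le> n" "1 \<le> i" "i < j" "j \<le> l"
    and AB: "F (l + m - 1) (gcomp l m i A B) = d l m i (F l A) (F m B)"
    and AC: "F (l + n - 1) (gcomp l n j A C) = d l n j (F l A) (F n C)"
    and r: "some_residual (gcomp (l + m - 1) n (j + m - 1) (gcomp l m i A B) C)
      \<in> {(i, i + m - 1), (j + m - 1, j + m - 1 + n - 1)}"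
  shows "F (l + m - 1 + n - 1) (gcomp (l + m - 1) n (j + m - 1) (gcomp l m i A B) C)
    = d (l + m - 1) n (j + m - 1) (d l m i (F l A) (F m B)) (F n C)"
proof -
  have chords: "chord_diagram l A" "chord_diagram m B" "chord_diagram n C"
    using A B C by (simp_all add: gravity_diagram_iff)
  have AB_grav: "gravity_diagram (l + m - 1) (gcomp l m i A B)"
    using gravity_diagram_gcomp[OF A B] assms by simp
  have AC_grav: "gravity_diagram (l + n - 1) (gcomp l n j A C)"
    using gravity_diagram_gcomp[OF A C] assms by simp
  have G: "gcomp (l + m - 1) n (j + m - 1) (gcomp l m i A B) C
      = gcomp (l + n - 1) m i (gcomp l n j A C) B"
    using gcomp_assoc_par[OF chords] assms by simp
  from r consider
      "some_residual (gcomp (l + n - 1) m i (gcomp l n j A C) B) = (i, i + m - 1)"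
    | "some_residual (gcomp (l + m - 1) n (j + m - 1) (gcomp l m i A B) C)
        = (j + m - 1, j + m - 1 + n - 1)"
    unfolding G by blast
  then show ?thesis
  proof cases
    case 1
    have "l + m - 1 + n - 1 = l + n - 1 + m - 1" using assms by simp
    moreover have "F (l + n - 1 + m - 1) (gcomp (l + n - 1) m i (gcomp l n j A C) B)
        = d (l + n - 1) m i (d l n j (F l A) (F n C)) (F m B)"
      using F_glued[OF AC_grav B _ _ _ _ 1] AC assms by simp
    moreover have "\<dots> = d (l + m - 1) n (j + m - 1) (d l m i (F l A) (F m B)) (F n C)"
      using comp_assoc_par F_in_Q A B C assms by simp
    ultimately show ?thesis unfolding G by simp
  next
    case 2
    then show ?thesis using F_glued[OF AB_grav C] AB assms by simp
  qed
qed

context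
  fixes m n :: nat
  \<comment> \<open>the induction hypothesis of F_gcomp\<close>
  assumes IH: "\<And>m' n' i' X Y. m' + n' < m + n \<Longrightarrow> 2 \<le> m' \<Longrightarrow> 2 \<le> n' \<Longrightarrow> 1 \<le> i' \<Longrightarrow> i' \<le> m'
      \<Longrightarrow> gravity_diagram m' X \<Longrightarrow> gravity_diagram n' Y
      \<Longrightarrow> F (m' + n' - 1) (gcomp m' n' i' X Y) = d m' n' i' (F m' X) (F n' Y)"
begin

lemma F_gcomp_inner_residual:
  assumes G1: "gravity_diagram m G1" and G2: "gravity_diagram n G2"
    and "2 \<le> m" "2 \<le> n" "1 \<le> i" "i \<le> m"
    and r: "residual G2 (a, b)" and some: "some_residual (gcomp m n i G1 G2) = shift_inner i (a, b)"
  shows "F (m + n - 1) (gcomp m n i G1 G2) = d m n i (F m G1) (F n G2)"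
proof -
  define n1 n2 H1 H2 where "n1 = n + a - b" and "n2 = b + 1 - a"
    and "H1 = outer_part (b + 1 - a) a G2" and "H2 = inner_part (b + 1 - a) a G2"
  note split = gravity_diagram_residual_split[OF G2 r, folded n1_def n2_def H1_def H2_def]
  have IH_H: "F n G2 = d n1 n2 a (F n1 H1) (F n2 H2)"
    using IH[of n1 n2 a H1 H2] split assms(3) by simp
  have "F (m + (n1 + n2 - 1) - 1) (gcomp m (n1 + n2 - 1) i G1 (gcomp n1 n2 a H1 H2))
      = d m (n1 + n2 - 1) i (F m G1) (d n1 n2 a (F n1 H1) (F n2 H2))"
    using split some assms by (intro F_assoc_seq IH) auto
  then show ?thesis using split IH_H by simp
qed

lemma F_gcomp_before_residual:
  assumes H1: "gravity_diagram m1 H1" and H2: "gravity_diagram m2 H2" and G2: "gravity_diagram n G2"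
    and "2 \<le> m1" "2 \<le> m2" "2 \<le> n" "1 \<le> i" "i < a" "a \<le> m1" and m: "m = m1 + m2 - 1"
    and some: "some_residual (gcomp m n i (gcomp m1 m2 a H1 H2) G2) = (a + n - 1, a + n - 1 + m2 - 1)"
  shows "F (m + n - 1) (gcomp m n i (gcomp m1 m2 a H1 H2) G2)
    = d m n i (d m1 m2 a (F m1 H1) (F m2 H2)) (F n G2)"
proof -
  have G: "gcomp m n i (gcomp m1 m2 a H1 H2) G2 = gcomp (m1 + n - 1) m2 (a + n - 1) (gcomp m1 n i H1 G2) H2"
    using gcomp_assoc_par[of m1 H1 n G2 m2 H2 i a] assms by (simp add: gravity_diagram_iff)
  have N: "m1 + n - 1 + m2 - 1 = m + n - 1" using assms by simp
  have "F (m1 + n - 1 + m2 - 1) (gcomp (m1 + n - 1) m2 (a + n - 1) (gcomp m1 n i H1 G2) H2)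
      = d (m1 + n - 1) m2 (a + n - 1) (d m1 n i (F m1 H1) (F n G2)) (F m2 H2)"
    using some assms unfolding G by (intro F_assoc_par IH) auto
  then have "F (m + n - 1) (gcomp m n i (gcomp m1 m2 a H1 H2) G2)
      = d (m1 + n - 1) m2 (a + n - 1) (d m1 n i (F m1 H1) (F n G2)) (F m2 H2)"
    unfolding G N .
  also have "\<dots> = d m n i (d m1 m2 a (F m1 H1) (F m2 H2)) (F n G2)"
    using comp_assoc_par[of m1 n m2 i a] F_in_Q assms by simp
  finally show ?thesis .
qed

lemma F_gcomp_nested_residual:
  assumes H1: "gravity_diagram m1 H1" and H2: "gravity_diagram m2 H2" and G2: "gravity_diagram n G2"
    and "2 \<le> m1" "2 \<le> m2" "2 \<le> n" "1 \<le> a" "a \<le> m1" "a \<le> i" "i \<le> a + m2 - 1"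
    and m: "m = m1 + m2 - 1"
    and some: "some_residual (gcomp m n i (gcomp m1 m2 a H1 H2) G2) = (a, a + (m2 + n - 1) - 1)"
  shows "F (m + n - 1) (gcomp m n i (gcomp m1 m2 a H1 H2) G2)
    = d m n i (d m1 m2 a (F m1 H1) (F m2 H2)) (F n G2)"
proof -
  define j where "j = i + 1 - a"
  have j: "1 \<le> j" "j \<le> m2" "a + j - 1 = i" using assms unfolding j_def by auto
  have G: "gcomp m n i (gcomp m1 m2 a H1 H2) G2 = gcomp m1 (m2 + n - 1) a H1 (gcomp m2 n j H2 G2)"
    using gcomp_assoc_seq[of m1 H1 m2 H2 n G2 a j] j assms by (simp add: gravity_diagram_iff)
  have N: "m1 + (m2 + n - 1) - 1 = m + n - 1" using assms by simp
  have "F (m1 + (m2 + n - 1) - 1) (gcomp m1 (m2 + n - 1) a H1 (gcomp m2 n j H2 G2))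
      = d m1 (m2 + n - 1) a (F m1 H1) (d m2 n j (F m2 H2) (F n G2))"
    using some j assms unfolding G by (intro F_assoc_seq IH) auto
  then have "F (m + n - 1) (gcomp m n i (gcomp m1 m2 a H1 H2) G2)
      = d m1 (m2 + n - 1) a (F m1 H1) (d m2 n j (F m2 H2) (F n G2))"
    unfolding G N .
  also have "\<dots> = d m n i (d m1 m2 a (F m1 H1) (F m2 H2)) (F n G2)"
    using comp_assoc_seq[of m1 m2 n a j] F_in_Q j assms by simp
  finally show ?thesis .
qed

lemma F_gcomp_after_residual:
  assumes H1: "gravity_diagram m1 H1" and H2: "gravity_diagram m2 H2" and G2: "gravity_diagram n G2"
    and "2 \<le> m1" "2 \<le> m2" "2 \<le> n" "1 \<le> a" "a + m2 - 1 < i" "i \<le> m" and m: "m = m1 + m2 - 1"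
    and some: "some_residual (gcomp m n i (gcomp m1 m2 a H1 H2) G2) = (a, a + m2 - 1)"
  shows "F (m + n - 1) (gcomp m n i (gcomp m1 m2 a H1 H2) G2)
    = d m n i (d m1 m2 a (F m1 H1) (F m2 H2)) (F n G2)"
proof -
  define j where "j = i + 1 - m2"
  have j: "a < j" "j \<le> m1" "j + m2 - 1 = i" using assms unfolding j_def by auto
  have "F (m1 + m2 - 1 + n - 1) (gcomp (m1 + m2 - 1) n (j + m2 - 1) (gcomp m1 m2 a H1 H2) G2)
      = d (m1 + m2 - 1) n (j + m2 - 1) (d m1 m2 a (F m1 H1) (F m2 H2)) (F n G2)"
    using some j assms by (intro F_assoc_par IH) auto
  then show ?thesis using j m by simp
qed

lemma F_gcomp_outer_residual:
  assumes G1: "gravity_diagram m G1" and G2: "gravity_diagram n G2"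
    and "2 \<le> m" "2 \<le> n" "1 \<le> i" "i \<le> m"
    and r: "residual G1 (a, b)" and some: "some_residual (gcomp m n i G1 G2) = shift_outer n i (a, b)"
  shows "F (m + n - 1) (gcomp m n i G1 G2) = d m n i (F m G1) (F n G2)"
proof -
  define m1 m2 H1 H2 where "m1 = m + a - b" and "m2 = b + 1 - a"
    and "H1 = outer_part (b + 1 - a) a G1" and "H2 = inner_part (b + 1 - a) a G1"
  note split = gravity_diagram_residual_split[OF G1 r, folded m1_def m2_def H1_def H2_def]
  have IH_H: "F m G1 = d m1 m2 a (F m1 H1) (F m2 H2)"
    using IH[of m1 m2 a H1 H2] split assms(4) by simp
  have "F (m + n - 1) (gcomp m n i (gcomp m1 m2 a H1 H2) G2)
      = d m n i (d m1 m2 a (F m1 H1) (F m2 H2)) (F n G2)"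
  proof (cases "i < a")
    case True
    then show ?thesis using F_gcomp_before_residual split some assms
      by (simp add: graft_start_def graft_end_def add_ac)
  next
    case False
    then consider "a \<le> i" "i \<le> b" | "b < i" by linarith
    then show ?thesis
    proof cases
      case 1
      then show ?thesis using F_gcomp_nested_residual split some assms
        by (simp add: graft_start_def graft_end_def)
    next
      case 2
      then show ?thesis using F_gcomp_after_residual split some assms
        by (simp add: graft_start_def graft_end_def)
    qed
  qed
  then show ?thesis using split IH_H by simp
qed

end

lemma F_gcomp:
  "2 \<le> m \<Longrightarrow> 2 \<le> n \<Longrightarrow> 1 \<le> i \<Longrightarrow> i \<le> m \<Longrightarrow> gravity_diagram m G1 \<Longrightarrow> gravity_diagram n G2
    \<Longrightarrow> F (m + n - 1) (gcomp m n i G1 G2) = d m n i (F m G1) (F n G2)"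
proof (induction "m + n" arbitrary: m n i G1 G2 rule: less_induct)
  case less
  have "residual (gcomp m n i G1 G2) (i, i + n - 1)"
    using residual_gcomp_glued less.prems by (simp add: gravity_diagram_iff)
  then have r: "residual (gcomp m n i G1 G2) (some_residual (gcomp m n i G1 G2))"
    by (rule residual_some_residual)
  from r less.prems(2,3) show ?case
  proof (cases rule: residual_gcomp_cases)
    case glued
    then show ?thesis using F_glued less.prems by blast
  next
    case (outer c)
    obtain a b where "c = (a, b)" by fastforce
    show ?thesis
      by (rule F_gcomp_outer_residual[OF less.hyps]) (use outer less.prems \<open>c = (a, b)\<close> in simp_all)
  next
    case (inner c)
    obtain a b where "c = (a, b)" by fastforce
    show ?thesis
      by (rule F_gcomp_inner_residual[OF less.hyps]) (use inner less.prems \<open>c = (a, b)\<close> in simp_all)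
  qed
qed

lemma F_unique:
  assumes hom: "ns_operad_hom gdiag gcomp Q d F'"
    and agree: "\<And>n x. 2 \<le> n \<Longrightarrow> x \<in> pdiag n \<Longrightarrow> F' n x = h n x"
  shows "2 \<le> N \<Longrightarrow> gravity_diagram N G \<Longrightarrow> F' N G = F N G"
proof (induction N arbitrary: G rule: less_induct)
  case (less N)
  show ?case
  proof (cases "\<exists>c. residual G c")
    case False
    then have "G \<in> pdiag N" using less.prems by (simp add: pdiag_def)
    then show ?thesis using agree F_prime less.prems(1) by simp
  next
    case True
    then obtain a b where r: "residual G (a, b)" by auto
    define m n X Y where "m = N + a - b" and "n = b + 1 - a"
      and "X = outer_part (b + 1 - a) a G" and "Y = inner_part (b + 1 - a) a G"
    note split = gravity_diagram_residual_split[OF less.prems(2) r, folded m_def n_def X_def Y_def]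
    have "F' N G = F' (m + n - 1) (gcomp m n a X Y)" using split by simp
    also have "\<dots> = d m n a (F' m X) (F' n Y)"
      using conjunct2[OF hom[unfolded ns_operad_hom_def]] split by (simp add: gdiag_def)
    also have "\<dots> = d m n a (F m X) (F n Y)" using less.IH split by simp
    also have "\<dots> = F N G" using F_gcomp split by simp
    finally show ?thesis .
  qed
qed

end

theorem mainTheorem7:
  "ns_operad gdiag gcomp
   \<and> (\<forall>n. 2 \<le> n \<longrightarrow> pdiag n \<subseteq> gdiag n)
   \<and> (\<forall>(Q :: nat \<Rightarrow> 'b set) (d :: nat \<Rightarrow> nat \<Rightarrow> nat \<Rightarrow> 'b \<Rightarrow> 'b \<Rightarrow> 'b)
        (h :: nat \<Rightarrow> (nat \<times> nat) set \<Rightarrow> 'b).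
       ns_operad Q d \<and> (\<forall>n x. 2 \<le> n \<longrightarrow> x \<in> pdiag n \<longrightarrow> h n x \<in> Q n) \<longrightarrow>
       (\<exists>F. ns_operad_hom gdiag gcomp Q d F
          \<and> (\<forall>n x. 2 \<le> n \<longrightarrow> x \<in> pdiag n \<longrightarrow> F n x = h n x)
          \<and> (\<forall>F'. ns_operad_hom gdiag gcomp Q d F'
                 \<and> (\<forall>n x. 2 \<le> n \<longrightarrow> x \<in> pdiag n \<longrightarrow> F' n x = h n x)
                 \<longrightarrow> (\<forall>n x. 2 \<le> n \<longrightarrow> x \<in> gdiag n \<longrightarrow> F' n x = F n x))))"
proof (intro conjI allI impI)
  show "ns_operad gdiag gcomp" by (rule ns_operad_gdiag)
  show "pdiag n \<subseteq> gdiag n" for n by (auto simp: pdiag_def gdiag_def)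
next
  fix Q :: "nat \<Rightarrow> 'b set" and d :: "nat \<Rightarrow> nat \<Rightarrow> nat \<Rightarrow> 'b \<Rightarrow> 'b \<Rightarrow> 'b"
    and h :: "nat \<Rightarrow> (nat \<times> nat) set \<Rightarrow> 'b"
  assume "ns_operad Q d \<and> (\<forall>n x. 2 \<le> n \<longrightarrow> x \<in> pdiag n \<longrightarrow> h n x \<in> Q n)"
  then interpret prime_valuation Q d h by unfold_locales blast+
  show "\<exists>F. ns_operad_hom gdiag gcomp Q d F
          \<and> (\<forall>n x. 2 \<le> n \<longrightarrow> x \<in> pdiag n \<longrightarrow> F n x = h n x)
          \<and> (\<forall>F'. ns_operad_hom gdiag gcomp Q d F'
                 \<and> (\<forall>n x. 2 \<le> n \<longrightarrow> x \<in> pdiag n \<longrightarrow> F' n x = h n x)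
                 \<longrightarrow> (\<forall>n x. 2 \<le> n \<longrightarrow> x \<in> gdiag n \<longrightarrow> F' n x = F n x))"
  proof (intro exI conjI allI impI)
    show "ns_operad_hom gdiag gcomp Q d F"
      unfolding ns_operad_hom_def gdiag_def mem_Collect_eq using F_in_Q F_gcomp by blast
    show "F n x = h n x" if "x \<in> pdiag n" for n x using F_prime[OF that] .
    show "F' n x = F n x"
      if "ns_operad_hom gdiag gcomp Q d F' \<and> (\<forall>n x. 2 \<le> n \<longrightarrow> x \<in> pdiag n \<longrightarrow> F' n x = h n x)"
        and "2 \<le> n" "x \<in> gdiag n" for F' n x
      using F_unique that by (simp add: gdiag_def)
  qed
qed

end
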